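(* Let $\alpha$ be a reduced operation sequence and $\lambda$ a push operation of $\alpha$. If the pop operations of $\alpha$ corresponding to $\lambda$ do not occupy a set of consecutive positions of $\alpha$ (i.e. they do not form a subword), then $\lambda$ is fixed.
   Context: Operation sequences: $\sigma[a]$ ($a\ge1$) denotes pushing the top $a$ elements of the input stack, as a block with relative order unchanged, onto the top of a working stack; $\tau[b]$ ($b\ge1$) denotes moving the top $b$ elements of the working stack, as a block with relative order unchanged, onto the top of an output stack; $\sigma=\sigma[1]$, $\tau=\tau[1]$. A well-formed operation sequence is a word $\alpha=\alpha_1\cdots\alpha_m$ in these symbols such that in every prefix the total push size is at least the total pop size, with equality for the whole word; its size $n$ is the total push size. Acting on an input stack containing $1,\dots,n$ with $1$ on top, it produces the permutation read from the final output stack top to bottom. Two well-formed sequences are equivalent if they have the same size and produce the same permutation. $\alpha$ is reduced if every consecutive pair $\alpha_i\alpha_{i+1}$ with $\alpha_i$ a push and $\alpha_{i+1}$ a pop equals $\sigma[1]\tau[1]$. The vertices of $\alpha$ are $v_0=(0,0)$ and $v_i=v_{i-1}+(a,a)$ if $\alpha_i=\sigma[a]$, $v_i=v_{i-1}+(b,-b)$ if $\alpha_i=\tau[b]$. The support of a push (resp. pop) is the set of elements it places on (resp. removes from) the working stack when $\alpha$ acts on input $1,\dots,n$. A push and a pop correspond if their supports intersect. An operation $\alpha_i$ of a reduced sequence $\alpha$ is fixed if for every reduced sequence $\beta=\beta_1\cdots\beta_{m'}$ equivalent to $\alpha$, with vertices $w_0,\dots,w_{m'}$, there is $j$ with $w_{j-1}=v_{i-1}$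 and $w_j=v_i$. *)

theory Defs
  imports Main
begin

(* sigma[a] = Push a, tau[b] = Pop b *)
datatype op = Push nat | Pop nat

type_synonym opseq = "op list"

(* state: (input stack, working stack, output stack); list head = top of stack *)
type_synonym state = "nat list \<times> nat list \<times> nat list"

fun is_push :: "op \<Rightarrow> bool" where
  "is_push (Push a) = True" | "is_push (Pop b) = False"

fun opsize :: "op \<Rightarrow> nat" where
  "opsize (Push a) = a" | "opsize (Pop b) = b"

fun push_amt :: "op \<Rightarrow> nat" where
  "push_amt (Push a) = a" | "push_amt (Pop b) = 0"

fun pop_amt :: "op \<Rightarrow> nat" where
  "pop_amt (Push a) = 0" | "pop_amt (Pop b) = b"

definition total_push :: "opseq \<Rightarrow> nat" where
  "total_push xs = sum_list (map push_amt xs)"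

definition total_pop :: "opseq \<Rightarrow> nat" where
  "total_pop xs = sum_list (map pop_amt xs)"

definition well_formed :: "opseq \<Rightarrow> bool" where
  "well_formed xs \<longleftrightarrow> (\<forall>x\<in>set xs. opsize x \<ge> 1)
     \<and> (\<forall>k \<le> length xs. total_pop (take k xs) \<le> total_push (take k xs))
     \<and> total_pop xs = total_push xs"

definition seq_size :: "opseq \<Rightarrow> nat" where
  "seq_size xs = total_push xs"

fun exec_op :: "op \<Rightarrow> state \<Rightarrow> state" where
  "exec_op (Push a) (inp, wk, out) = (drop a inp, take a inp @ wk, out)"
| "exec_op (Pop b) (inp, wk, out) = (inp, drop b wk, take b wk @ out)"

definition init_state :: "nat \<Rightarrow> state" where
  "init_state n = ([1..<n+1], [], [])"

definition state_after :: "opseq \<Rightarrow> nat \<Rightarrow> state" where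
  "state_after xs k = fold exec_op (take k xs) (init_state (seq_size xs))"

(* produced permutation: final output stack read top to bottom *)
definition produced :: "opseq \<Rightarrow> nat list" where
  "produced xs = snd (snd (state_after xs (length xs)))"

definition equivalent :: "opseq \<Rightarrow> opseq \<Rightarrow> bool" where
  "equivalent xs ys \<longleftrightarrow> well_formed xs \<and> well_formed ys
     \<and> seq_size xs = seq_size ys \<and> produced xs = produced ys"

definition reduced :: "opseq \<Rightarrow> bool" where
  "reduced xs \<longleftrightarrow> (\<forall>i. Suc i < length xs \<longrightarrow> is_push (xs!i) \<longrightarrow> \<not> is_push (xs!Suc i)
        \<longrightarrow> xs!i = Push 1 \<and> xs!Suc i = Pop 1)"

fun dvec :: "op \<Rightarrow> int \<times> int" where
  "dvec (Push a) = (int a, int a)" | "dvec (Pop b) = (int b, - int b)"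

definition vertex :: "opseq \<Rightarrow> nat \<Rightarrow> int \<times> int" where
  "vertex xs k = (sum_list (map (fst \<circ> dvec) (take k xs)), sum_list (map (snd \<circ> dvec) (take k xs)))"

(* support of the operation at 0-based position i (the paper's alpha_{i+1}) *)
definition support :: "opseq \<Rightarrow> nat \<Rightarrow> nat set" where
  "support xs i = (case state_after xs i of (inp, wk, out) \<Rightarrow>
      (case xs!i of Push a \<Rightarrow> set (take a inp) | Pop b \<Rightarrow> set (take b wk)))"

definition corr_pops :: "opseq \<Rightarrow> nat \<Rightarrow> nat set" where
  "corr_pops xs i = {j. j < length xs \<and> \<not> is_push (xs!j) \<and> support xs j \<inter> support xs i \<noteq> {}}"

definition fixed_op :: "opseq \<Rightarrow> nat \<Rightarrow> bool" where
  "fixed_op xs i \<longleftrightarrow> (\<forall>ys. reduced ys \<and> equivalent ys xs \<longrightarrow>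
      (\<exists>j < length ys. vertex ys j = vertex xs i \<and> vertex ys (Suc j) = vertex xs (Suc i)))"

end

theory Submission
  imports Defs "HOL-Library.Sublist"
begin

(* Let the push at position i put the block x..L on the working stack after Q pops.  If its
   corresponding pops are not consecutive, some pop between two of them outputs an element y
   outside the block while the next pop still outputs a block element; by the LIFO discipline
   y > L, and in the produced permutation y is output after x and L + 1 but before L (and before
   x - 1 if x - 1 was still waiting).  Moreover the first Q outputs are all below x and the
   (Q+1)-st one is above L, because the first pop after a push in a reduced sequence outputs the
   last pushed element.  These conditions only mention the permutation.  In any reduced sequence
   producing it, the push containing x must start after exactly x - 1 pushed and Q popped
   elements, and it must end at L: two adjacent elements e above f of a push block appear in the
   permutation either as consecutive entries e, f or with f before e, so y cannot lie between
   them; and if L were pushed by a later block, the stack segment from L down to x would be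
   output contiguously and y would lie inside it.  So the edge from (x - 1 + Q, x - 1 - Q) to
   (L + Q, L - Q) is in every such sequence. *)

declare upt_Suc [simp del] \<comment> \<open>keeps intervals \<open>[a..<b]\<close> from being split at their last element\<close>

lemma upt_split: "i \<le> j \<Longrightarrow> j \<le> k \<Longrightarrow> [i..<k] = [i..<j] @ [j..<k]"
  by (metis le_add_diff_inverse upt_add_eq_append)

lemma sublist_upt_pair:
  assumes "a \<le> e" and "Suc e < b"
  shows "sublist [e, Suc e] [a..<b]"
proof -
  have "[a..<b] = [a..<e] @ [e, Suc e] @ [Suc (Suc e)..<b]"
    using assms upt_split[of a e b] upt_split[of e "Suc (Suc e)" b] by (simp add: upt_conv_Cons)
  then show ?thesis
    by (metis sublist_appendI)
qed

lemma nth_mem_drop: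
  assumes "d \<le> q" and "q < length xs"
  shows "xs ! q \<in> set (drop d xs)"
proof -
  have "xs ! q = drop d xs ! (q - d)" and "q - d < length (drop d xs)"
    using assms by simp_all
  then show ?thesis
    by (metis nth_mem)
qed

lemma not_interval_gap:
  fixes S :: "nat set"
  assumes "finite S" and "\<not> (\<exists>s t. S = {s..<t})"
  shows "\<exists>j p. j \<in> S \<and> j < p \<and> p \<notin> S \<and> Suc p \<in> S"
proof -
  have "S \<noteq> {}"
    using assms(2) by (metis atLeastLessThan_empty order_refl)
  then have in_S: "Min S \<in> S" "Max S \<in> S"
    using assms(1) by simp_all
  have "S \<subseteq> {Min S..<Suc (Max S)}"
    using assms(1) by (auto simp: less_Suc_eq_le)
  moreover have "S \<noteq> {Min S..<Suc (Max S)}"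
    using assms(2) by blast
  ultimately obtain m where "m \<in> {Min S..<Suc (Max S)}" and "m \<notin> S"
    by blast
  with in_S have m: "Min S < m" "m < Max S" "m \<notin> S"
    by (auto simp: less_Suc_eq_le le_less)
  obtain d where "\<forall>i\<le>d. m + i \<notin> S" and "m + Suc d \<in> S"
    using ex_least_nat_less[of "\<lambda>d. m + d \<in> S" "Max S - m"] m in_S by auto
  then show ?thesis
    using m(1) in_S(1) by (metis add_Suc_right le_add1 le_refl less_le_trans)
qed

(* only meaningful for elements of a distinct list *)
definition index :: "'a list \<Rightarrow> 'a \<Rightarrow> nat" where
  "index xs a = (THE p. p < length xs \<and> xs ! p = a)"

lemma index_nth: "distinct xs \<Longrightarrow> p < length xs \<Longrightarrow> index xs (xs ! p) = p"
  unfolding index_def by (rule the_equality) (auto simp: nth_eq_iff_index_eq)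

lemma index_less_length: "distinct xs \<Longrightarrow> a \<in> set xs \<Longrightarrow> index xs a < length xs"
  by (metis in_set_conv_nth index_nth)

lemma nth_index: "distinct xs \<Longrightarrow> a \<in> set xs \<Longrightarrow> xs ! index xs a = a"
  by (metis in_set_conv_nth index_nth)

lemma index_append_Cons: "distinct (u @ a # v) \<Longrightarrow> index (u @ a # v) a = length u"
  using index_nth[of "u @ a # v" "length u"] by simp

section \<open>Runs of the stack machine\<close>

definition pushed :: "opseq \<Rightarrow> nat \<Rightarrow> nat" where
  "pushed s k = total_push (take k s)"

definition popped :: "opseq \<Rightarrow> nat \<Rightarrow> nat" where
  "popped s k = total_pop (take k s)"

definition work_stack :: "opseq \<Rightarrow> nat \<Rightarrow> nat list" where
  "work_stack s k = fst (snd (state_after s k))"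

definition out_stack :: "opseq \<Rightarrow> nat \<Rightarrow> nat list" where
  "out_stack s k = snd (snd (state_after s k))"

lemma total_push_append [simp]: "total_push (xs @ ys) = total_push xs + total_push ys"
  by (simp add: total_push_def)

lemma total_pop_append [simp]: "total_pop (xs @ ys) = total_pop xs + total_pop ys"
  by (simp add: total_pop_def)

lemma pushed_0 [simp]: "pushed s 0 = 0"
  by (simp add: pushed_def total_push_def)

lemma popped_0 [simp]: "popped s 0 = 0"
  by (simp add: popped_def total_pop_def)

lemma pushed_Suc: "k < length s \<Longrightarrow> pushed s (Suc k) = pushed s k + push_amt (s ! k)"
  by (simp add: pushed_def take_Suc_conv_app_nth total_push_def)

lemma popped_Suc: "k < length s \<Longrightarrow> popped s (Suc k) = popped s k + pop_amt (s ! k)"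
  by (simp add: popped_def take_Suc_conv_app_nth total_pop_def)

lemma pushed_mono: "k \<le> k' \<Longrightarrow> pushed s k \<le> pushed s k'"
  by (metis le_add1 le_add_diff_inverse pushed_def take_add total_push_append)

lemma popped_mono: "k \<le> k' \<Longrightarrow> popped s k \<le> popped s k'"
  by (metis le_add1 le_add_diff_inverse popped_def take_add total_pop_append)

lemma pushed_length: "length s \<le> k \<Longrightarrow> pushed s k = seq_size s"
  by (simp add: pushed_def seq_size_def)

lemma pushed_le_size: "pushed s k \<le> seq_size s"
  by (metis nat_le_linear pushed_length pushed_mono)

lemma popped_length: "well_formed s \<Longrightarrow> length s \<le> k \<Longrightarrow> popped s k = seq_size s"
  by (simp add: popped_def well_formed_def seq_size_def)

lemma popped_le_pushed: "well_formed s \<Longrightarrow> popped s k \<le> pushed s k"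
  by (metis nat_le_linear order_refl popped_def popped_length pushed_def pushed_length
      well_formed_def)

lemma opsize_pos: "well_formed s \<Longrightarrow> k < length s \<Longrightarrow> 1 \<le> opsize (s ! k)"
  by (simp add: well_formed_def)

lemma vertex_eq: "vertex s k = (int (pushed s k) + int (popped s k), int (pushed s k) - int (popped s k))"
proof -
  have "sum_list (map (fst \<circ> dvec) l) = int (total_push l) + int (total_pop l)
      \<and> sum_list (map (snd \<circ> dvec) l) = int (total_push l) - int (total_pop l)" for l
  proof (induction l)
    case (Cons x l)
    then show ?case by (cases x) (auto simp: total_push_def total_pop_def)
  qed (simp add: total_push_def total_pop_def)
  then show ?thesis
    by (simp add: vertex_def pushed_def popped_def)
qed

lemma exec_op_Push:
  "exec_op (Push a) st = (drop a (fst st), take a (fst st) @ fst (snd st), snd (snd st))"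
  by (cases st) auto

lemma exec_op_Pop:
  "exec_op (Pop b) st = (fst st, drop b (fst (snd st)), take b (fst (snd st)) @ snd (snd st))"
  by (cases st) auto

lemma state_after_Suc: "k < length s \<Longrightarrow> state_after s (Suc k) = exec_op (s ! k) (state_after s k)"
  by (simp add: state_after_def take_Suc_conv_app_nth)

lemma state_after_add:
  "state_after s (k + d) = fold exec_op (take d (drop k s)) (state_after s k)"
  by (simp add: state_after_def take_add)

lemma in_stack_state_after: "fst (state_after s k) = drop (pushed s k) [1..<seq_size s + 1]"
proof (induction k)
  case 0
  show ?case by (simp add: state_after_def init_state_def)
next
  case (Suc k)
  show ?case
  proof (cases "k < length s")
    case True
    then show ?thesis
      using Suc by (cases "s ! k") (simp_all add: state_after_Suc pushed_Suc exec_op_Push exec_op_Pop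
          add.commute)
  next
    case False
    then show ?thesis
      using Suc by (simp add: state_after_def pushed_def)
  qed
qed

lemma work_stack_Suc_Push:
  assumes "k < length s" and "s ! k = Push a"
  shows "work_stack s (Suc k) = [pushed s k + 1..<pushed s (Suc k) + 1] @ work_stack s k"
    and "out_stack s (Suc k) = out_stack s k"
proof -
  have "pushed s (Suc k) = pushed s k + a"
    using assms by (simp add: pushed_Suc)
  moreover have "pushed s (Suc k) \<le> seq_size s"
    by (rule pushed_le_size)
  ultimately have "take a (drop (pushed s k) [1..<seq_size s + 1])
      = [pushed s k + 1..<pushed s (Suc k) + 1]"
    by (simp add: take_upt add.commute)
  then show "work_stack s (Suc k) = [pushed s k + 1..<pushed s (Suc k) + 1] @ work_stack s k"
    using assms by (simp add: work_stack_def state_after_Suc exec_op_Push in_stack_state_after)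
  show "out_stack s (Suc k) = out_stack s k"
    using assms by (simp add: out_stack_def state_after_Suc exec_op_Push)
qed

lemma work_stack_Suc_Pop:
  assumes "k < length s" and "s ! k = Pop b"
  shows "work_stack s (Suc k) = drop b (work_stack s k)"
    and "out_stack s (Suc k) = take b (work_stack s k) @ out_stack s k"
  using assms by (simp_all add: work_stack_def out_stack_def state_after_Suc exec_op_Pop)

lemma support_Push:
  assumes "k < length s" and "s ! k = Push a"
  shows "support s k = {pushed s k + 1..pushed s (Suc k)}"
proof -
  have "support s k = set (take a (fst (state_after s k)))"
    using assms(2) by (simp add: support_def split: prod.split)
  also have "\<dots> = set (take a (drop (pushed s k) [1..<seq_size s + 1]))"
    by (simp add: in_stack_state_after)
  also have "\<dots> = {pushed s k + 1..pushed s (Suc k)}"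
    using assms pushed_le_size[of s "Suc k"]
    by (simp add: pushed_Suc take_upt add.commute atLeastLessThanSuc_atLeastAtMost)
  finally show ?thesis .
qed

lemma support_Pop: "s ! k = Pop b \<Longrightarrow> support s k = set (take b (work_stack s k))"
  by (simp add: support_def work_stack_def split: prod.split)

lemma length_stacks:
  assumes "well_formed s" and "k \<le> length s"
  shows "length (out_stack s k) = popped s k"
    and "length (work_stack s k) = pushed s k - popped s k"
proof -
  have "length (out_stack s k) = popped s k \<and> length (work_stack s k) = pushed s k - popped s k"
    using assms(2)
  proof (induction k)
    case 0
    show ?case by (simp add: out_stack_def work_stack_def state_after_def init_state_def)
  next
    case (Suc k)
    then have k: "k < length s" by simp
    show ?case
    proof (cases "s ! k")
      case (Push a)
      then show ?thesis
        using Suc k popped_le_pushed[OF assms(1), of k]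
        by (simp add: work_stack_Suc_Push pushed_Suc popped_Suc add.commute)
    next
      case (Pop b)
      have "popped s (Suc k) \<le> pushed s (Suc k)"
        by (rule popped_le_pushed[OF assms(1)])
      then show ?thesis
        using Suc k Pop by (simp add: work_stack_Suc_Pop pushed_Suc popped_Suc)
    qed
  qed
  then show "length (out_stack s k) = popped s k"
    and "length (work_stack s k) = pushed s k - popped s k" by simp_all
qed

lemma stacks_distinct_set:
  assumes "well_formed s" and "k \<le> length s"
  shows "distinct (work_stack s k @ out_stack s k)"
    and "set (work_stack s k @ out_stack s k) = {1..pushed s k}"
proof -
  have "distinct (work_stack s k @ out_stack s k)
      \<and> set (work_stack s k @ out_stack s k) = {1..pushed s k}"
    using assms(2)
  proof (induction k)
    case 0
    show ?case by (simp add: out_stack_def work_stack_def state_after_def init_state_def)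
  next
    case (Suc k)
    then have k: "k < length s" by simp
    show ?case
    proof (cases "s ! k")
      case (Push a)
      have "pushed s k \<le> pushed s (Suc k)"
        by (rule pushed_mono) simp
      moreover have "set (work_stack s k @ out_stack s k) \<inter> {pushed s k + 1..<pushed s (Suc k) + 1} = {}"
        using Suc k by auto
      ultimately show ?thesis
        using Suc k Push by (simp add: work_stack_Suc_Push) fastforce
    next
      case (Pop b)
      let ?w = "work_stack s k" and ?o = "out_stack s k"
      have swap: "distinct (ys @ xs @ zs) = distinct (xs @ ys @ zs)" "set (ys @ xs @ zs) = set (xs @ ys @ zs)"
        for xs ys zs :: "nat list"
        by (auto simp: distinct_append)
      have "distinct (?w @ ?o)" and "set (?w @ ?o) = {1..pushed s k}"
        using Suc k by simp_all
      then have "distinct (take b ?w @ drop b ?w @ ?o)" and "set (take b ?w @ drop b ?w @ ?o) = {1..pushed s k}"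
        by (simp_all only: append_take_drop_id append_assoc[symmetric])
      then have "distinct (drop b ?w @ take b ?w @ ?o)" and "set (drop b ?w @ take b ?w @ ?o) = {1..pushed s k}"
        using swap[of "drop b ?w" "take b ?w" ?o] by simp_all
      then show ?thesis
        using k Pop by (simp add: work_stack_Suc_Pop pushed_Suc)
    qed
  qed
  then show "distinct (work_stack s k @ out_stack s k)"
    and "set (work_stack s k @ out_stack s k) = {1..pushed s k}" by simp_all
qed

lemma stack_elem_bounds:
  assumes "well_formed s" and "k \<le> length s" and "e \<in> set (work_stack s k) \<union> set (out_stack s k)"
  shows "1 \<le> e" and "e \<le> pushed s k"
  using stacks_distinct_set(2)[OF assms(1,2)] assms(3) by (metis atLeastAtMost_iff set_append)+

lemma work_stack_final: "well_formed s \<Longrightarrow> work_stack s (length s) = []"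
  using length_stacks(2)[of s "length s"] by (simp add: popped_length pushed_length)

lemma produced_eq_out_stack: "produced s = out_stack s (length s)"
  by (simp add: produced_def out_stack_def)

lemma produced_distinct: "well_formed s \<Longrightarrow> distinct (produced s)"
  using stacks_distinct_set(1)[of s "length s"] by (simp add: produced_eq_out_stack work_stack_final)

lemma set_produced: "well_formed s \<Longrightarrow> set (produced s) = {1..seq_size s}"
  using stacks_distinct_set(2)[of s "length s"]
  by (simp add: produced_eq_out_stack work_stack_final pushed_length)

lemma length_produced: "well_formed s \<Longrightarrow> length (produced s) = seq_size s"
  using length_stacks(1)[of s "length s"] by (simp add: produced_eq_out_stack popped_length)

lemma set_work_stack_subset_produced:
  assumes "well_formed s" and "k \<le> length s"
  shows "set (work_stack s k) \<subseteq> set (produced s)"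
proof
  fix e
  assume "e \<in> set (work_stack s k)"
  then have "1 \<le> e" and "e \<le> pushed s k"
    using stack_elem_bounds[OF assms] by simp_all
  then show "e \<in> set (produced s)"
    using pushed_le_size[of s k] set_produced[OF assms(1)] by simp
qed

lemma out_stack_suffix:
  assumes "k \<le> k'" and "k' \<le> length s"
  shows "suffix (out_stack s k) (out_stack s k')"
  using assms
proof (induction k' rule: dec_induct)
  case base
  show ?case by simp
next
  case (step k')
  then show ?case
    by (cases "s ! k'") (auto simp: work_stack_Suc_Push work_stack_Suc_Pop intro: suffix_appendI)
qed

lemma out_stack_eq_drop:
  assumes "well_formed s" and "k \<le> length s"
  shows "out_stack s k = drop (seq_size s - popped s k) (produced s)"
proof -
  let ?P = "produced s"
  have "?P = take (length ?P - length (out_stack s k)) ?P @ out_stack s k"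
    using suffix_take out_stack_suffix[OF assms(2) order_refl] by (simp add: produced_eq_out_stack)
  then have "out_stack s k = drop (length ?P - length (out_stack s k)) ?P"
    by (metis append_take_drop_id same_append_eq)
  then show ?thesis
    using assms by (simp add: length_produced length_stacks(1))
qed

lemma set_out_stack_mono:
  "k \<le> k' \<Longrightarrow> k' \<le> length s \<Longrightarrow> set (out_stack s k) \<subseteq> set (out_stack s k')"
  using out_stack_suffix set_mono_suffix by blast

lemma set_out_stack_subset_produced: "k \<le> length s \<Longrightarrow> set (out_stack s k) \<subseteq> set (produced s)"
  using set_out_stack_mono[of k "length s" s] by (simp add: produced_eq_out_stack)

lemma index_less_if_out_stack:
  assumes "well_formed s" and "k \<le> length s" and "e \<in> set (out_stack s k)"
    and "f \<in> set (produced s)" and "f \<notin> set (out_stack s k)"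
  shows "index (produced s) f < index (produced s) e"
proof -
  let ?P = "produced s" and ?d = "seq_size s - popped s k"
  have P: "distinct ?P" and o: "out_stack s k = drop ?d ?P"
    using assms(1,2) by (simp_all add: produced_distinct out_stack_eq_drop)
  obtain q where "q < length (drop ?d ?P)" and "drop ?d ?P ! q = e"
    using assms(3) o by (metis in_set_conv_nth)
  then have "index ?P e = ?d + q"
    using index_nth[OF P, of "?d + q"] by simp
  moreover have "index ?P f < ?d"
  proof (rule ccontr)
    assume "\<not> index ?P f < ?d"
    then have "f = drop ?d ?P ! (index ?P f - ?d)" and "index ?P f - ?d < length (drop ?d ?P)"
      using nth_index[OF P assms(4)] index_less_length[OF P assms(4)] by simp_all
    then show False
      using assms(5) o by (metis nth_mem)
  qed
  ultimately show ?thesis by simp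
qed

lemma mem_support_pop:
  assumes "well_formed s" and "k < length s" and "\<not> is_push (s ! k)" and "e \<in> support s k"
  shows "e \<in> set (work_stack s k)" and "e \<notin> set (out_stack s k)"
    and "e \<in> set (out_stack s (Suc k))"
proof -
  obtain b where b: "s ! k = Pop b"
    using assms(3) by (cases "s ! k") simp_all
  then have "e \<in> set (take b (work_stack s k))"
    using assms(4) support_Pop by simp
  then show "e \<in> set (work_stack s k)" and "e \<in> set (out_stack s (Suc k))"
    using b assms(2) by (auto simp: work_stack_Suc_Pop dest: in_set_takeD)
  then show "e \<notin> set (out_stack s k)"
    using stacks_distinct_set(1)[OF assms(1), of k] assms(2) by auto
qed

lemma support_nonempty:
  assumes "well_formed s" and "k < length s"
  shows "support s k \<noteq> {}"
proof (cases "s ! k")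
  case (Push a)
  have "1 \<le> a"
    using opsize_pos[OF assms] Push by simp
  then show ?thesis
    using assms Push by (simp add: support_Push pushed_Suc)
next
  case (Pop b)
  have "1 \<le> b"
    using opsize_pos[OF assms] Pop by simp
  moreover have "popped s (Suc k) \<le> pushed s (Suc k)"
    by (rule popped_le_pushed[OF assms(1)])
  ultimately have "0 < length (work_stack s k)"
    using length_stacks(2)[OF assms(1), of k] assms(2) Pop by (simp add: pushed_Suc popped_Suc)
  then show ?thesis
    using Pop \<open>1 \<le> b\<close> by (auto simp: support_Pop take_eq_Nil)
qed

lemma popped_eq_iff_all_push:
  assumes "well_formed s" and "a \<le> b" and "b \<le> length s"
  shows "popped s a = popped s b \<longleftrightarrow> (\<forall>q. a \<le> q \<and> q < b \<longrightarrow> is_push (s ! q))"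
  using assms(2,3)
proof (induction b rule: dec_induct)
  case base
  show ?case by auto
next
  case (step b)
  have "pop_amt (s ! b) = 0 \<longleftrightarrow> is_push (s ! b)"
    using opsize_pos[OF assms(1), of b] step.prems by (cases "s ! b") auto
  moreover have "popped s a \<le> popped s b"
    using step.hyps(1) by (rule popped_mono)
  ultimately show ?case
    using step by (auto simp: popped_Suc less_Suc_eq)
qed

lemma work_stack_suffix_if_all_push:
  assumes "a \<le> b" and "b \<le> length s" and "\<forall>q. a \<le> q \<and> q < b \<longrightarrow> is_push (s ! q)"
  shows "suffix (work_stack s a) (work_stack s b)"
  using assms
proof (induction b rule: dec_induct)
  case base
  show ?case by simp
next
  case (step b)
  then obtain c where "s ! b = Push c"
    by (metis is_push.elims(2) lessI le_refl)
  then show ?case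
    using step by (simp add: work_stack_Suc_Push suffix_appendI)
qed

lemma push_block_containing:
  assumes "1 \<le> v" and "v \<le> seq_size s"
  shows "\<exists>k < length s. is_push (s ! k) \<and> pushed s k < v \<and> v \<le> pushed s (Suc k)"
proof -
  obtain k where k: "k < length s" "\<not> v \<le> pushed s k" "v \<le> pushed s (Suc k)"
    using ex_least_nat_less[of "\<lambda>k. v \<le> pushed s k" "length s"] assms
    by (auto simp: pushed_length)
  then have "push_amt (s ! k) \<noteq> 0"
    by (auto simp: pushed_Suc)
  then show ?thesis
    using k by (metis is_push.elims(3) push_amt.simps(2) not_le)
qed

lemma first_pop_after_push:
  assumes wf: "well_formed s" and k: "k < length s" and push: "is_push (s ! k)"
  obtains p where "k < p" "p < length s" "\<not> is_push (s ! p)"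
    "\<forall>q. k \<le> q \<and> q < p \<longrightarrow> is_push (s ! q)"
proof -
  have "\<exists>p. k < p \<and> p < length s \<and> \<not> is_push (s ! p)"
  proof (rule ccontr)
    assume "\<not> ?thesis"
    then have "\<forall>q. k \<le> q \<and> q < length s \<longrightarrow> is_push (s ! q)"
      using push by (metis le_neq_implies_less)
    then have "popped s k = popped s (length s)"
      using popped_eq_iff_all_push[OF wf, of k "length s"] k by simp
    moreover have "popped s k < pushed s (Suc k)"
      using popped_le_pushed[OF wf, of k] opsize_pos[OF wf k] push k
      by (cases "s ! k") (simp_all add: pushed_Suc)
    ultimately show False
      using pushed_le_size[of s "Suc k"] popped_length[OF wf, of "length s"] by simp
  qed
  then obtain p where p: "k < p" "p < length s" "\<not> is_push (s ! p)"
    and before: "\<forall>q<p. \<not> (k < q \<and> q < length s \<and> \<not> is_push (s ! q))"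
    using exists_least_iff[of "\<lambda>p. k < p \<and> p < length s \<and> \<not> is_push (s ! p)"] by blast
  moreover have "\<forall>q. k \<le> q \<and> q < p \<longrightarrow> is_push (s ! q)"
    using before push p(2) by (metis le_neq_implies_less order.strict_trans)
  ultimately show ?thesis
    using that by blast
qed

(* In a reduced sequence that first pop is a Pop 1 right after a Push 1, so it outputs the last
   pushed element. *)
lemma produced_at_first_pop_after_push:
  assumes wf: "well_formed s" and red: "reduced s" and k: "k < length s" and push: "is_push (s ! k)"
  shows "\<exists>p. k < p \<and> p < length s \<and> \<not> is_push (s ! p)
           \<and> produced s ! (seq_size s - Suc (popped s k)) = pushed s p"
proof -
  obtain p where p: "k < p" "p < length s" "\<not> is_push (s ! p)"
    and all_push: "\<forall>q. k \<le> q \<and> q < p \<longrightarrow> is_push (s ! q)"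
    using first_pop_after_push[OF wf k push] .
  have p1: "Suc (p - 1) = p" and "p - 1 < length s"
    using p by simp_all
  moreover have "is_push (s ! (p - 1))"
    using all_push p by simp
  ultimately have "s ! (p - 1) = Push 1" and "s ! p = Pop 1"
    using red p unfolding reduced_def by metis+
  moreover have "pushed s p = Suc (pushed s (p - 1))"
    using pushed_Suc[OF \<open>p - 1 < length s\<close>] \<open>s ! (p - 1) = Push 1\<close> p1 by simp
  ultimately have "work_stack s p = pushed s p # work_stack s (p - 1)"
    using work_stack_Suc_Push(1)[OF \<open>p - 1 < length s\<close>] p1 by (simp add: upt_conv_Cons)
  then have "out_stack s (Suc p) = pushed s p # out_stack s p"
    using work_stack_Suc_Pop(2)[OF p(2) \<open>s ! p = Pop 1\<close>] by simp
  moreover have "popped s (Suc p) = Suc (popped s k)"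
    using popped_eq_iff_all_push[OF wf, of k p] all_push p \<open>s ! p = Pop 1\<close> by (simp add: popped_Suc)
  moreover have "popped s (Suc p) \<le> seq_size s"
    using popped_le_pushed[OF wf] pushed_le_size le_trans by blast
  ultimately have "out_stack s (Suc p) = drop (seq_size s - Suc (popped s k)) (produced s)"
    and "seq_size s - Suc (popped s k) < length (produced s)"
    using out_stack_eq_drop[OF wf, of "Suc p"] length_produced[OF wf] p by simp_all
  then have "produced s ! (seq_size s - Suc (popped s k)) = hd (out_stack s (Suc p))"
    by (simp add: hd_drop_conv_nth)
  then show ?thesis
    using p \<open>out_stack s (Suc p) = pushed s p # out_stack s p\<close> by auto
qed

section \<open>Order of output along a segment of the working stack\<close>

(* The possible fates of a contiguous segment S of the working stack: it is still on the stack,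
   it was output in one piece, a pop has split it (top part output, bottom part still waiting),
   or its bottom end was output after its top end. *)
definition segment_order :: "nat list \<Rightarrow> state \<Rightarrow> bool" where
  "segment_order S st \<longleftrightarrow> sublist S (fst (snd st)) \<or> sublist S (snd (snd st))
     \<or> (hd S \<in> set (snd (snd st)) \<and> last S \<in> set (fst (snd st)))
     \<or> (\<exists>u v z. snd (snd st) = u @ last S # v @ hd S # z)"

lemma segment_order_Push:
  "segment_order S (inp, w, ou) \<Longrightarrow> segment_order S (inp', A @ w, ou)"
  by (auto simp: segment_order_def sublist_append)

lemma segment_order_Pop:
  assumes "S \<noteq> []" and "segment_order S (inp, w, ou)"
  shows "segment_order S (inp, drop b w, take b w @ ou)"
proof -
  let ?t = "take b w" and ?d = "drop b w"
  have w: "w = ?t @ ?d" by simp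
  consider "sublist S w" | "sublist S ou" | "hd S \<in> set ou" "last S \<in> set w"
    | u v z where "ou = u @ last S # v @ hd S # z"
    using assms(2) by (auto simp: segment_order_def)
  then show ?thesis
  proof cases
    case 1
    then consider "sublist S ?t" | "sublist S ?d"
      | S1 S2 where "S = S1 @ S2" "suffix S1 ?t" "prefix S2 ?d" "S1 \<noteq> []" "S2 \<noteq> []"
      by (metis w sublist_append append_Nil append_Nil2 prefix_imp_sublist suffix_imp_sublist)
    then show ?thesis
    proof cases
      case 3
      then have "hd S \<in> set ?t" and "last S \<in> set ?d"
        using set_mono_suffix set_mono_prefix by fastforce+
      then show ?thesis by (simp add: segment_order_def)
    qed (auto simp: segment_order_def sublist_append)
  next
    case 3
    show ?thesis
    proof (cases "last S \<in> set ?t")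
      case True
      then obtain u v where "?t = u @ last S # v" by (meson split_list)
      moreover obtain v' z where "ou = v' @ hd S # z" using 3 by (meson split_list)
      ultimately have "?t @ ou = u @ last S # (v @ v') @ hd S # z" by simp
      then show ?thesis unfolding segment_order_def snd_conv by blast
    next
      case False
      then have "last S \<in> set ?d" using 3 w by (metis Un_iff set_append)
      then show ?thesis using 3 by (simp add: segment_order_def)
    qed
  next
    case 4
    then have "?t @ ou = (?t @ u) @ last S # v @ hd S # z" by simp
    then show ?thesis unfolding segment_order_def snd_conv by blast
  qed (auto simp: segment_order_def sublist_append)
qed

lemma segment_order_exec_op:
  "S \<noteq> [] \<Longrightarrow> segment_order S st \<Longrightarrow> segment_order S (exec_op x st)"
  by (cases st; cases x) (simp_all add: segment_order_Push segment_order_Pop)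

lemma segment_order_later:
  assumes "sublist S (work_stack s k)" and "S \<noteq> []" and "k \<le> k'"
  shows "segment_order S (state_after s k')"
proof -
  have "segment_order S st \<Longrightarrow> segment_order S (fold exec_op ops st)" for ops st
    by (induction ops arbitrary: st) (simp_all add: segment_order_exec_op assms(2))
  moreover have "segment_order S (state_after s k)"
    using assms(1) by (simp add: segment_order_def work_stack_def)
  ultimately show ?thesis
    using state_after_add[of s k "k' - k"] assms(3) by simp
qed

lemma out_stack_hd_if_last:
  assumes "well_formed s" and "k \<le> k'" and "k' \<le> length s"
    and "sublist S (work_stack s k)" and "S \<noteq> []" and "last S \<in> set (out_stack s k')"
  shows "hd S \<in> set (out_stack s k')"
proof -
  have "last S \<notin> set (work_stack s k')"
    using assms(6) stacks_distinct_set(1)[OF assms(1,3)] by auto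
  then have "\<not> sublist S (work_stack s k')"
    using assms(5) last_in_set set_mono_sublist by blast
  then show ?thesis
    using segment_order_later[OF assms(4,5,2)] assms(5) hd_in_set set_mono_sublist
    by (fastforce simp: segment_order_def work_stack_def out_stack_def)
qed

lemma produced_segment:
  assumes "well_formed s" and "k \<le> length s" and "sublist S (work_stack s k)" and "S \<noteq> []"
  shows "sublist S (produced s) \<or> (\<exists>u v z. produced s = u @ last S # v @ hd S # z)"
  using segment_order_later[OF assms(3,4) assms(2)] work_stack_final[OF assms(1)] assms(4)
  by (auto simp: segment_order_def work_stack_def produced_def)

lemma index_produced_segment:
  assumes "well_formed s" and "k \<le> length s" and "sublist S (work_stack s k)" and "S \<noteq> []"
  shows "index (produced s) (last S) < index (produced s) (hd S)
    \<or> (\<forall>m < length S. index (produced s) (S ! m) = index (produced s) (hd S) + m)"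
  using produced_segment[OF assms]
proof
  assume "sublist S (produced s)"
  then obtain u v where P: "produced s = u @ S @ v"
    by (auto simp: sublist_def)
  then have "index (produced s) (S ! m) = length u + m" if "m < length S" for m
    using that index_nth[of "produced s" "length u + m"] produced_distinct[OF assms(1)]
    by (simp add: nth_append)
  then show ?thesis
    using assms(4) by (simp add: hd_conv_nth)
next
  assume "\<exists>u v z. produced s = u @ last S # v @ hd S # z"
  then obtain u v z where P: "produced s = u @ last S # v @ hd S # z"
    by blast
  have "distinct (u @ last S # v @ hd S # z)" and "distinct ((u @ last S # v) @ hd S # z)"
    using produced_distinct[OF assms(1)] P by simp_all
  then have "index (produced s) (last S) < index (produced s) (hd S)"
    unfolding P by (metis index_append_Cons append_Cons append_assoc length_append
      less_add_Suc1 length_Cons add_Suc_right)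
  then show ?thesis ..
qed

lemma index_produced_adjacent:
  assumes "well_formed s" and "k \<le> length s" and "sublist [e, f] (work_stack s k)"
  shows "index (produced s) f < index (produced s) e \<or> index (produced s) f = Suc (index (produced s) e)"
proof -
  consider "index (produced s) (last [e, f]) < index (produced s) (hd [e, f])"
    | "\<forall>m < length [e, f]. index (produced s) ([e, f] ! m) = index (produced s) (hd [e, f]) + m"
    using index_produced_segment[OF assms] by blast
  then show ?thesis
  proof cases
    case 1
    then show ?thesis by simp
  next
    case 2
    from this[rule_format, of 1] show ?thesis by simp
  qed
qed

lemma nth_segment_at_index:
  assumes "well_formed s" and "k \<le> length s" and "sublist S (work_stack s k)" and "S \<noteq> []"
    and "z \<in> set (produced s)" and "index (produced s) (hd S) \<le> index (produced s) z"
    and "index (produced s) z \<le> index (produced s) (last S)"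
  shows "\<exists>m < length S. S ! m = z"
proof -
  let ?P = "produced s"
  have "\<not> index ?P (last S) < index ?P (hd S)"
    using assms(6,7) by simp
  then have idx: "\<forall>m < length S. index ?P (S ! m) = index ?P (hd S) + m"
    using index_produced_segment[OF assms(1-4)] by blast
  then have "index ?P (last S) = index ?P (hd S) + (length S - 1)"
    using assms(4) by (simp add: last_conv_nth)
  moreover have "0 < length S"
    using assms(4) by simp
  ultimately have m: "index ?P z - index ?P (hd S) < length S"
    using assms(6,7) by linarith
  have "S ! (index ?P z - index ?P (hd S)) \<in> set ?P"
    using m set_mono_sublist[OF assms(3)] set_work_stack_subset_produced[OF assms(1,2)] nth_mem by blast
  moreover have "index ?P (S ! (index ?P z - index ?P (hd S))) = index ?P z"
    using idx m assms(6) by simp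
  ultimately have "S ! (index ?P z - index ?P (hd S)) = z"
    using nth_index produced_distinct[OF assms(1)] assms(5) by metis
  then show ?thesis
    using m by blast
qed

section \<open>A push whose corresponding pops are not consecutive\<close>

(* Conditions on the produced permutation alone: they are read off from a push of x..L after
   Q pops whose corresponding pops are not consecutive, and they force every reduced sequence
   producing the permutation to contain that same push. *)
definition push_pattern :: "nat list \<Rightarrow> nat \<Rightarrow> nat \<Rightarrow> nat \<Rightarrow> bool" where
  "push_pattern P Q x L \<longleftrightarrow> 1 \<le> x \<and> x \<le> L \<and> L < length P \<and> Q < length P
     \<and> (\<forall>e \<in> set (drop (length P - Q) P). e < x)
     \<and> L < P ! (length P - Suc Q)
     \<and> (\<exists>y \<in> set P. L < y \<and> index P L < index P y \<and> index P y < index P x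
          \<and> index P y < index P (Suc L)
          \<and> (1 < x \<and> x - 1 \<notin> set (drop (length P - Q) P) \<longrightarrow> index P (x - 1) < index P y))"

locale reduced_push =
  fixes xs :: opseq and i :: nat
  assumes wf: "well_formed xs" and red: "reduced xs" and i: "i < length xs" and push: "is_push (xs ! i)"
begin

lemma corr_pops_iff:
  "j \<in> corr_pops xs i \<longleftrightarrow> j < length xs \<and> \<not> is_push (xs ! j)
     \<and> (\<exists>b \<in> support xs j. pushed xs i < b \<and> b \<le> pushed xs (Suc i))"
  using push support_Push[OF i] by (cases "xs ! i") (auto simp: corr_pops_def Suc_le_eq)

lemma corr_pops_after: "j \<in> corr_pops xs i \<Longrightarrow> i < j"
proof (rule ccontr)
  assume "j \<in> corr_pops xs i" and "\<not> i < j"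
  then obtain b where "j < length xs" "\<not> is_push (xs ! j)" "b \<in> support xs j" "pushed xs i < b"
    by (auto simp: corr_pops_iff)
  then have "b \<le> pushed xs j"
    using mem_support_pop(1)[OF wf] stack_elem_bounds(2)[OF wf, of j b] by simp
  moreover have "pushed xs j \<le> pushed xs i"
    using \<open>\<not> i < j\<close> by (simp add: pushed_mono)
  ultimately show False
    using \<open>pushed xs i < b\<close> by simp
qed

lemma pop_before_corr_pop:
  assumes "i < p" and "Suc p \<in> corr_pops xs i"
  shows "\<not> is_push (xs ! p)"
proof
  assume "is_push (xs ! p)"
  moreover have "Suc p < length xs" and "\<not> is_push (xs ! Suc p)"
    using assms(2) by (simp_all add: corr_pops_iff)
  ultimately have "xs ! p = Push 1" and "xs ! Suc p = Pop 1"
    using red unfolding reduced_def by blast+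
  moreover have p: "p < length xs"
    using \<open>Suc p < length xs\<close> by simp
  ultimately have "support xs (Suc p) = {pushed xs (Suc p)}"
    by (simp add: support_Pop work_stack_Suc_Push pushed_Suc upt_conv_Cons)
  moreover have "pushed xs (Suc i) < pushed xs (Suc p)"
    using pushed_mono[of "Suc i" p xs] assms(1) \<open>xs ! p = Push 1\<close> p by (simp add: pushed_Suc)
  ultimately show False
    using assms(2) by (auto simp: corr_pops_iff)
qed

lemma work_stack_after_push:
  "work_stack xs (Suc i) = [pushed xs i + 1..<pushed xs (Suc i) + 1] @ work_stack xs i"
  using push work_stack_Suc_Push(1)[OF i] by (cases "xs ! i") simp_all

lemma first_outputs_below:
  "\<forall>e \<in> set (drop (length (produced xs) - popped xs i) (produced xs)). e < pushed xs i + 1"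
  using out_stack_eq_drop[OF wf, of i] stack_elem_bounds(2)[OF wf, of i] i
  by (fastforce simp: length_produced[OF wf])

lemma output_of_first_pop:
  assumes "Suc i < length xs" and "is_push (xs ! Suc i)"
  shows "pushed xs (Suc i) < produced xs ! (length (produced xs) - Suc (popped xs i))"
proof -
  obtain q where q: "i < q" "q < length xs" "\<not> is_push (xs ! q)"
    and "produced xs ! (seq_size xs - Suc (popped xs i)) = pushed xs q"
    using produced_at_first_pop_after_push[OF wf red i push] by blast
  moreover have "Suc (Suc i) \<le> q"
    using q assms(2) by (metis Suc_leI le_neq_implies_less)
  moreover obtain a2 where "xs ! Suc i = Push a2"
    using assms(2) by (cases "xs ! Suc i") simp_all
  then have "pushed xs (Suc i) < pushed xs (Suc (Suc i))"
    using opsize_pos[OF wf assms(1)] by (simp add: pushed_Suc[OF assms(1)])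
  ultimately show ?thesis
    using pushed_mono[of "Suc (Suc i)" q xs] by (simp add: length_produced[OF wf])
qed

end

locale corr_pops_gap = reduced_push +
  fixes j p b b' y :: nat
  assumes order: "i < j" "j < p" "Suc p < length xs"
    and pop_j: "\<not> is_push (xs ! j)" "b \<in> support xs j"
    and b: "pushed xs i < b" "b \<le> pushed xs (Suc i)"
    and pop_p: "\<not> is_push (xs ! p)" "y \<in> support xs p"
    and y: "\<not> (pushed xs i < y \<and> y \<le> pushed xs (Suc i))"
    and pop_Suc_p: "\<not> is_push (xs ! Suc p)" "b' \<in> support xs (Suc p)"
    and b': "pushed xs i < b'" "b' \<le> pushed xs (Suc i)"
begin

lemma hit_elem_output: "b \<in> set (out_stack xs p)"
  using mem_support_pop(3)[OF wf _ pop_j] set_out_stack_mono[of "Suc j" p xs] order by auto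

lemma next_op_is_push: "is_push (xs ! Suc i)"
proof (rule ccontr)
  assume "\<not> is_push (xs ! Suc i)"
  moreover have "Suc i < length xs"
    using order by simp
  ultimately have "xs ! i = Push 1"
    using red push unfolding reduced_def by blast
  then have "b = b'"
    using b b' pushed_Suc[OF i] by simp
  moreover have "b \<in> set (out_stack xs (Suc p))"
    using hit_elem_output set_out_stack_mono[of p "Suc p" xs] order by auto
  ultimately show False
    using mem_support_pop(2)[OF wf _ pop_Suc_p] order by simp
qed

lemma block_top_output:
  shows "pushed xs i + 1 \<in> set (out_stack xs p)"
    and "pushed xs (Suc i) + 1 \<in> set (out_stack xs p)"
proof -
  let ?t = "pushed xs i" and ?L = "pushed xs (Suc i)" and ?L' = "pushed xs (Suc (Suc i))"
  obtain R where R: "work_stack xs (Suc i) = [?t + 1..<b + 1] @ R"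
    using work_stack_after_push b upt_split[of "?t + 1" "b + 1" "?L + 1"] by simp
  then have top: "sublist [?t + 1..<b + 1] (work_stack xs (Suc i))"
    by simp
  show "?t + 1 \<in> set (out_stack xs p)"
    using out_stack_hd_if_last[OF wf _ _ top] hit_elem_output b order by (simp add: hd_upt)
  have Suc_i: "Suc i < length xs"
    using order by simp
  then obtain a2 where a2: "xs ! Suc i = Push a2"
    using next_op_is_push by (cases "xs ! Suc i") simp_all
  then have "?L < ?L'"
    using opsize_pos[OF wf Suc_i] by (simp add: pushed_Suc[OF Suc_i])
  have "Suc (Suc i) \<le> j"
    using order pop_j(1) next_op_is_push by (metis Suc_leI le_neq_implies_less)
  have next_top: "sublist ([?L + 1..<?L' + 1] @ [?t + 1..<b + 1]) (work_stack xs (Suc (Suc i)))"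
    using work_stack_Suc_Push(1)[OF Suc_i a2] R by (metis append_assoc sublist_append_rightI)
  show "?L + 1 \<in> set (out_stack xs p)"
    using out_stack_hd_if_last[OF wf _ _ next_top] hit_elem_output b order \<open>?L < ?L'\<close>
      \<open>Suc (Suc i) \<le> j\<close> by (simp add: hd_upt)
qed

(* LIFO: b' is still on the working stack after pop p + 1, hence so is everything below it *)
lemma block_bottom_waits:
  assumes "v \<in> set (work_stack xs i) \<or> (b' \<le> v \<and> v \<le> pushed xs (Suc i))"
  shows "v \<notin> set (out_stack xs (Suc p))"
proof -
  let ?t = "pushed xs i" and ?L = "pushed xs (Suc i)"
  have w: "work_stack xs (Suc i) = [?t + 1..<b'] @ [b'..<?L + 1] @ work_stack xs i"
    using work_stack_after_push b' upt_split[of "?t + 1" b' "?L + 1"] by simp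
  obtain S where S: "sublist S (work_stack xs (Suc i))" "S \<noteq> []" "hd S = b'" "last S = v"
  proof (cases "v \<in> set (work_stack xs i)")
    case True
    then obtain u z where "work_stack xs i = u @ v # z"
      by (meson split_list)
    then have "work_stack xs (Suc i) = [?t + 1..<b'] @ ([b'..<?L + 1] @ u @ [v]) @ z"
      using w by simp
    then have "sublist ([b'..<?L + 1] @ u @ [v]) (work_stack xs (Suc i))"
      by (simp only: sublist_appendI)
    moreover have "hd ([b'..<?L + 1] @ u @ [v]) = b'"
      using b' by (simp add: hd_upt)
    ultimately show ?thesis
      using that by simp
  next
    case False
    then have "b' \<le> v" and "v \<le> ?L"
      using assms by simp_all
    then have "work_stack xs (Suc i) = [?t + 1..<b'] @ [b'..<v + 1] @ ([v + 1..<?L + 1] @ work_stack xs i)"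
      using w upt_split[of b' "v + 1" "?L + 1"] by simp
    then have "sublist [b'..<v + 1] (work_stack xs (Suc i))"
      by (simp only: sublist_appendI)
    then show ?thesis
      using that \<open>b' \<le> v\<close> by (simp add: hd_upt)
  qed
  show ?thesis
  proof
    assume "v \<in> set (out_stack xs (Suc p))"
    then have "b' \<in> set (out_stack xs (Suc p))"
      using out_stack_hd_if_last[OF wf _ _ S(1,2)] S(3,4) order by simp
    then show False
      using mem_support_pop(2)[OF wf _ pop_Suc_p] order by simp
  qed
qed

lemma gap_elem_output: "y \<notin> set (out_stack xs p)" "y \<in> set (out_stack xs (Suc p))"
  using mem_support_pop(2,3)[OF wf _ pop_p] order by simp_all

lemma gap_elem_in_produced: "y \<in> set (produced xs)"
  using gap_elem_output(2) set_out_stack_subset_produced[of "Suc p" xs] order by auto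

lemma below_block_waits:
  assumes "1 \<le> v" and "v \<le> pushed xs i" and "v \<notin> set (out_stack xs i)"
  shows "v \<notin> set (out_stack xs (Suc p))"
proof -
  have "v \<in> set (work_stack xs i @ out_stack xs i)"
    using stacks_distinct_set(2)[OF wf, of i] i assms(1,2) by simp
  then show ?thesis
    using block_bottom_waits assms(3) by simp
qed

lemma gap_elem_above_block: "pushed xs (Suc i) < y"
proof (rule ccontr)
  assume "\<not> ?thesis"
  then have "y \<le> pushed xs i"
    using y by simp
  moreover have "1 \<le> y"
    using gap_elem_in_produced set_produced[OF wf] by simp
  moreover have "y \<notin> set (out_stack xs i)"
    using gap_elem_output(1) set_out_stack_mono[of i p xs] order by auto
  ultimately show False
    using below_block_waits gap_elem_output(2) by blast
qed

lemma index_gap_elem: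
  defines "P \<equiv> produced xs"
  shows "index P (pushed xs (Suc i)) < index P y"
    and "index P y < index P (pushed xs i + 1)"
    and "index P y < index P (pushed xs (Suc i) + 1)"
    and "1 \<le> pushed xs i \<Longrightarrow> pushed xs i \<notin> set (out_stack xs i) \<Longrightarrow> index P (pushed xs i) < index P y"
proof -
  have p: "p \<le> length xs" "Suc p \<le> length xs"
    using order by simp_all
  have "pushed xs (Suc i) \<in> set P"
    using b b' set_produced[OF wf] pushed_le_size[of xs "Suc i"] by (simp add: P_def)
  then show "index P (pushed xs (Suc i)) < index P y"
    using index_less_if_out_stack[OF wf p(2) gap_elem_output(2)] block_bottom_waits b' by (simp add: P_def)
  show "index P y < index P (pushed xs i + 1)" and "index P y < index P (pushed xs (Suc i) + 1)"
    using index_less_if_out_stack[OF wf p(1) _ gap_elem_in_produced gap_elem_output(1)] block_top_output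
    by (simp_all add: P_def)
  assume "1 \<le> pushed xs i" and "pushed xs i \<notin> set (out_stack xs i)"
  moreover have "pushed xs i \<in> set P"
    using \<open>1 \<le> pushed xs i\<close> set_produced[OF wf] pushed_le_size[of xs i] by (simp add: P_def)
  ultimately show "index P (pushed xs i) < index P y"
    using index_less_if_out_stack[OF wf p(2) gap_elem_output(2)] below_block_waits by (simp add: P_def)
qed

end

lemma (in reduced_push) corr_pops_gap_if_noncontiguous:
  assumes "\<not> (\<exists>s t. corr_pops xs i = {s..<t})"
  obtains j p b b' y where "corr_pops_gap xs i j p b b' y"
proof -
  let ?t = "pushed xs i" and ?L = "pushed xs (Suc i)"
  have "finite (corr_pops xs i)"
    by (simp add: corr_pops_def)
  then obtain j p where gap: "j \<in> corr_pops xs i" "j < p" "p \<notin> corr_pops xs i" "Suc p \<in> corr_pops xs i"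
    using not_interval_gap[OF _ assms] by blast
  have "i < j"
    by (rule corr_pops_after[OF gap(1)])
  obtain b where "\<not> is_push (xs ! j)" "b \<in> support xs j" "?t < b" "b \<le> ?L"
    using gap(1) corr_pops_iff by blast
  obtain b' where "Suc p < length xs" "\<not> is_push (xs ! Suc p)"
      "b' \<in> support xs (Suc p)" "?t < b'" "b' \<le> ?L"
    using gap(4) corr_pops_iff by blast
  have "\<not> is_push (xs ! p)"
    using pop_before_corr_pop \<open>i < j\<close> gap by simp
  obtain y where "y \<in> support xs p"
    using support_nonempty[OF wf, of p] \<open>Suc p < length xs\<close> by auto
  have "\<not> (?t < y \<and> y \<le> ?L)"
    using gap(3) corr_pops_iff \<open>y \<in> support xs p\<close> \<open>\<not> is_push (xs ! p)\<close> \<open>Suc p < length xs\<close> by auto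
  have "corr_pops_gap xs i j p b b' y"
    by unfold_locales (fact wf red i push \<open>i < j\<close> gap(2) \<open>Suc p < length xs\<close> \<open>\<not> is_push (xs ! j)\<close>
      \<open>b \<in> support xs j\<close> \<open>?t < b\<close> \<open>b \<le> ?L\<close> \<open>\<not> is_push (xs ! p)\<close> \<open>y \<in> support xs p\<close>
      \<open>\<not> (?t < y \<and> y \<le> ?L)\<close> \<open>\<not> is_push (xs ! Suc p)\<close> \<open>b' \<in> support xs (Suc p)\<close>
      \<open>?t < b'\<close> \<open>b' \<le> ?L\<close>)+
  then show thesis
    by (rule that)
qed

lemma (in reduced_push) push_pattern_if_noncontiguous:
  assumes "\<not> (\<exists>s t. corr_pops xs i = {s..<t})"
  shows "push_pattern (produced xs) (popped xs i) (pushed xs i + 1) (pushed xs (Suc i))"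
proof -
  let ?P = "produced xs" and ?t = "pushed xs i" and ?L = "pushed xs (Suc i)"
  obtain j p b b' y where "corr_pops_gap xs i j p b b' y"
    using corr_pops_gap_if_noncontiguous[OF assms] .
  then interpret gap: corr_pops_gap xs i j p b b' y .
  have "y \<le> length ?P"
    using gap.gap_elem_in_produced set_produced[OF wf] length_produced[OF wf] by simp
  then have "?L < length ?P"
    using gap.gap_elem_above_block by simp
  moreover have "popped xs i < length ?P"
    using popped_le_pushed[OF wf, of i] gap.b \<open>?L < length ?P\<close> by simp
  moreover have "drop (length ?P - popped xs i) ?P = out_stack xs i"
    using out_stack_eq_drop[OF wf, of i] i by (simp add: length_produced[OF wf])
  then have "1 < ?t + 1 \<and> ?t + 1 - 1 \<notin> set (drop (length ?P - popped xs i) ?P)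
      \<longrightarrow> index ?P (?t + 1 - 1) < index ?P y"
    using gap.index_gap_elem(4) by simp
  then have "\<exists>y \<in> set ?P. ?L < y \<and> index ?P ?L < index ?P y \<and> index ?P y < index ?P (?t + 1)
      \<and> index ?P y < index ?P (Suc ?L)
      \<and> (1 < ?t + 1 \<and> ?t + 1 - 1 \<notin> set (drop (length ?P - popped xs i) ?P)
           \<longrightarrow> index ?P (?t + 1 - 1) < index ?P y)"
    using gap.gap_elem_in_produced gap.gap_elem_above_block gap.index_gap_elem(1-3) by auto
  moreover have "?t + 1 \<le> ?L" and "Suc i < length xs"
    using gap.b gap.order by simp_all
  ultimately show ?thesis
    unfolding push_pattern_def
    using first_outputs_below output_of_first_pop[OF _ gap.next_op_is_push] by simp
qed

section \<open>Reduced sequences producing the pattern\<close>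

locale pattern_block =
  fixes ys :: opseq and P :: "nat list" and Q x L y T :: nat
  assumes wf: "well_formed ys" and red: "reduced ys" and P: "produced ys = P"
    and bounds: "1 \<le> x" "x \<le> L" "L < length P" "Q < length P"
    and first_below: "\<forall>e \<in> set (drop (length P - Q) P). e < x"
    and first_pop_above: "L < P ! (length P - Suc Q)"
    and y: "y \<in> set P" "L < y" "index P L < index P y" "index P y < index P x"
      "index P y < index P (Suc L)"
    and below_x: "1 < x \<and> x - 1 \<notin> set (drop (length P - Q) P) \<longrightarrow> index P (x - 1) < index P y"
    and T: "T < length ys" "is_push (ys ! T)" "pushed ys T < x" "x \<le> pushed ys (Suc T)"
begin

lemma popped_le_if_pushed_le:
  assumes "k \<le> length ys" and "pushed ys k \<le> L"
  shows "popped ys k \<le> Q"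
proof (rule ccontr)
  assume "\<not> popped ys k \<le> Q"
  then have "P ! (length P - Suc Q) \<in> set (out_stack ys k)"
    using out_stack_eq_drop[OF wf assms(1)] nth_mem_drop[of "length P - popped ys k" "length P - Suc Q" P]
      bounds(4) P length_produced[OF wf] by simp
  then have "P ! (length P - Suc Q) \<le> pushed ys k"
    using stack_elem_bounds(2)[OF wf assms(1)] by simp
  then show False
    using first_pop_above assms(2) by simp
qed

lemma popped_at_block: "popped ys T = Q"
proof (rule antisym)
  show "popped ys T \<le> Q"
    using popped_le_if_pushed_le T bounds(2) by simp
  show "Q \<le> popped ys T"
  proof (rule ccontr)
    assume "\<not> Q \<le> popped ys T"
    obtain q where "T < q" and q: "P ! (seq_size ys - Suc (popped ys T)) = pushed ys q"
      using produced_at_first_pop_after_push[OF wf red T(1,2)] P by blast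
    then have "x \<le> P ! (length P - Suc (popped ys T))"
      using pushed_mono[of "Suc T" q ys] T(4) length_produced[OF wf] P by simp
    moreover have "P ! (length P - Suc (popped ys T)) \<in> set (drop (length P - Q) P)"
      using nth_mem_drop[of "length P - Q" "length P - Suc (popped ys T)" P] \<open>\<not> Q \<le> popped ys T\<close>
        bounds(4) by simp
    ultimately show False
      using first_below by fastforce
  qed
qed

lemma work_stack_after_block:
  "work_stack ys (Suc T) = [pushed ys T + 1..<pushed ys (Suc T) + 1] @ work_stack ys T"
  using T(2) work_stack_Suc_Push(1)[OF T(1)] by (cases "ys ! T") simp_all

lemma index_adjacent_in_block:
  assumes "pushed ys T < e" and "Suc e \<le> pushed ys (Suc T)"
  shows "index P (Suc e) < index P e \<or> index P (Suc e) = Suc (index P e)"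
proof -
  have "sublist [e, Suc e] [pushed ys T + 1..<pushed ys (Suc T) + 1]"
    using assms by (intro sublist_upt_pair) simp_all
  then have "sublist [e, Suc e] (work_stack ys (Suc T))"
    unfolding work_stack_after_block by (simp add: sublist_append)
  then show ?thesis
    using index_produced_adjacent[OF wf, of "Suc T"] T(1) P by simp
qed

lemma pushed_at_block: "pushed ys T = x - 1"
proof (rule ccontr)
  assume "pushed ys T \<noteq> x - 1"
  then have lt: "pushed ys T < x - 1"
    using T(3) by simp
  have "x - 1 \<notin> set (out_stack ys T)"
    using stack_elem_bounds(2)[OF wf, of T] T(1) lt by fastforce
  moreover have "drop (length P - Q) P = out_stack ys T"
    using out_stack_eq_drop[OF wf, of T] T(1) popped_at_block P length_produced[OF wf] by simp
  ultimately have "index P (x - 1) < index P y"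
    using below_x lt by simp
  moreover have "index P x < index P (x - 1) \<or> index P x = Suc (index P (x - 1))"
    using index_adjacent_in_block[of "x - 1"] lt T(4) by simp
  ultimately show False
    using y(4) by linarith
qed

lemma pushed_after_block_le: "pushed ys (Suc T) \<le> L"
proof (rule ccontr)
  assume "\<not> pushed ys (Suc T) \<le> L"
  then have "index P (Suc L) < index P L \<or> index P (Suc L) = Suc (index P L)"
    using index_adjacent_in_block[of L] T(3) bounds(2) by simp
  then show False
    using y(3,5) by linarith
qed

lemma block_containing_L_on_top:
  assumes "pushed ys (Suc T) < L"
  obtains k pre where "k < length ys" "pushed ys k < L" "L \<le> pushed ys (Suc k)"
    "work_stack ys k = pre @ work_stack ys (Suc T)"
    "work_stack ys (Suc k) = [pushed ys k + 1..<pushed ys (Suc k) + 1] @ work_stack ys k"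
proof -
  obtain k where k: "k < length ys" "is_push (ys ! k)" "pushed ys k < L" "L \<le> pushed ys (Suc k)"
    using push_block_containing[of L ys] bounds length_produced[OF wf] P by auto
  have "Suc T \<le> k"
  proof (rule ccontr)
    assume "\<not> Suc T \<le> k"
    then show False
      using pushed_mono[of "Suc k" "Suc T" ys] k(4) assms by simp
  qed
  have "popped ys (Suc T) = Q"
    using T(1,2) popped_at_block by (cases "ys ! T") (simp_all add: popped_Suc)
  moreover have "popped ys k \<le> Q"
    using popped_le_if_pushed_le k by simp
  ultimately have "popped ys (Suc T) = popped ys k"
    using popped_mono[OF \<open>Suc T \<le> k\<close>, of ys] by simp
  then have "suffix (work_stack ys (Suc T)) (work_stack ys k)"
    using work_stack_suffix_if_all_push[OF \<open>Suc T \<le> k\<close>] popped_eq_iff_all_push[OF wf \<open>Suc T \<le> k\<close>] k(1)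
    by simp
  then obtain pre where "work_stack ys k = pre @ work_stack ys (Suc T)"
    by (auto simp: suffix_def)
  moreover have "work_stack ys (Suc k) = [pushed ys k + 1..<pushed ys (Suc k) + 1] @ work_stack ys k"
    using k(2) work_stack_Suc_Push(1)[OF k(1)] by (cases "ys ! k") simp_all
  ultimately show ?thesis
    using that k by simp
qed

lemma segment_from_L_to_x:
  assumes "pushed ys (Suc T) < L"
  obtains k pre where "k < length ys" "pushed ys k < L" "L \<le> pushed ys (Suc k)"
    "set pre \<subseteq> set (work_stack ys k)"
    "sublist ([L..<pushed ys (Suc k) + 1] @ pre @ [x]) (work_stack ys (Suc k))"
proof -
  obtain k pre where k: "k < length ys" "pushed ys k < L" "L \<le> pushed ys (Suc k)"
    and pre: "work_stack ys k = pre @ work_stack ys (Suc T)"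
    and w: "work_stack ys (Suc k) = [pushed ys k + 1..<pushed ys (Suc k) + 1] @ work_stack ys k"
    using block_containing_L_on_top[OF assms] .
  have "[pushed ys k + 1..<pushed ys (Suc k) + 1] = [pushed ys k + 1..<L] @ [L..<pushed ys (Suc k) + 1]"
    using k(2,3) upt_split[of "pushed ys k + 1" L "pushed ys (Suc k) + 1"] by simp
  moreover have "work_stack ys (Suc T) = x # [x + 1..<pushed ys (Suc T) + 1] @ work_stack ys T"
    using work_stack_after_block pushed_at_block bounds(1) T(4) by (simp add: upt_conv_Cons)
  ultimately have "work_stack ys (Suc k) = [pushed ys k + 1..<L]
      @ ([L..<pushed ys (Suc k) + 1] @ pre @ [x]) @ ([x + 1..<pushed ys (Suc T) + 1] @ work_stack ys T)"
    using w pre by simp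
  then have "sublist ([L..<pushed ys (Suc k) + 1] @ pre @ [x]) (work_stack ys (Suc k))"
    by (simp only: sublist_appendI)
  moreover have "set pre \<subseteq> set (work_stack ys k)"
    using pre by simp
  ultimately show thesis
    using that k by blast
qed

(* Otherwise the stack segment S from L down to x is output contiguously (x is not output before
   L), so y, which is output between them, lies inside S. *)
lemma pushed_after_block_ge: "L \<le> pushed ys (Suc T)"
proof (rule ccontr)
  assume "\<not> L \<le> pushed ys (Suc T)"
  then obtain k pre where k: "k < length ys" "pushed ys k < L" "L \<le> pushed ys (Suc k)"
    and pre: "set pre \<subseteq> set (work_stack ys k)"
    and seg: "sublist ([L..<pushed ys (Suc k) + 1] @ pre @ [x]) (work_stack ys (Suc k))"
    using segment_from_L_to_x by (metis not_le)
  define lb where "lb = pushed ys (Suc k) + 1 - L"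
  define S where "S = [L..<pushed ys (Suc k) + 1] @ pre @ [x]"
  have S: "S \<noteq> []" "hd S = L" "last S = x" "length S = lb + length pre + 1"
    using k(3) by (simp_all add: S_def lb_def hd_upt)
  note seg = seg[folded S_def]
  have "\<exists>m < length S. S ! m = y"
    using nth_segment_at_index[OF wf _ seg S(1), of y] k(1) S(2,3) y(1,3,4) P by simp
  then obtain m where m: "m < length S" "S ! m = y"
    by blast
  have "m \<noteq> 0"
    using m(2) S(1,2) y(2) by (metis hd_conv_nth less_irrefl)
  show False
  proof (cases "m < lb")
    case True
    then have "S = [L, Suc L] @ [Suc (Suc L)..<pushed ys (Suc k) + 1] @ pre @ [x]"
      using \<open>m \<noteq> 0\<close> by (simp add: S_def lb_def upt_conv_Cons)
    then have "sublist [L, Suc L] (work_stack ys (Suc k))"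
      using seg by (metis sublist_append_rightI sublist_order.dual_order.trans)
    then show False
      using index_produced_adjacent[OF wf, of "Suc k"] k(1) y(3,5) P by fastforce
  next
    case False
    then have "S ! m = (pre @ [x]) ! (m - lb)"
      by (simp add: S_def lb_def nth_append)
    moreover have "m - lb < length (pre @ [x])"
      using m(1) S(4) by simp
    ultimately have "y \<in> set (pre @ [x])"
      using m(2) by (metis nth_mem)
    then have "y \<in> set (work_stack ys k)"
      using pre y(2) bounds(2) by auto
    then show False
      using stack_elem_bounds(2)[OF wf, of k y] k(1,2) y(2) by simp
  qed
qed

end

lemma push_of_pattern:
  assumes wf: "well_formed ys" and red: "reduced ys" and pat: "push_pattern (produced ys) Q x L"
  shows "\<exists>T < length ys. is_push (ys ! T) \<and> pushed ys T = x - 1 \<and> pushed ys (Suc T) = L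
    \<and> popped ys T = Q"
proof -
  let ?P = "produced ys"
  obtain y where bounds: "1 \<le> x" "x \<le> L" "L < length ?P" "Q < length ?P"
    and first_below: "\<forall>e \<in> set (drop (length ?P - Q) ?P). e < x"
    and first_pop_above: "L < ?P ! (length ?P - Suc Q)"
    and y: "y \<in> set ?P" "L < y" "index ?P L < index ?P y" "index ?P y < index ?P x"
      "index ?P y < index ?P (Suc L)"
    and below_x: "1 < x \<and> x - 1 \<notin> set (drop (length ?P - Q) ?P) \<longrightarrow> index ?P (x - 1) < index ?P y"
    using pat unfolding push_pattern_def by blast
  obtain T where T: "T < length ys" "is_push (ys ! T)" "pushed ys T < x" "x \<le> pushed ys (Suc T)"
    using push_block_containing[of x ys] bounds length_produced[OF wf] by auto
  interpret pattern_block ys ?P Q x L y T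
    by unfold_locales (fact wf red refl bounds first_below first_pop_above y below_x T)+
  have "pushed ys T = x - 1" and "pushed ys (Suc T) = L" and "popped ys T = Q"
    using pushed_at_block pushed_after_block_le pushed_after_block_ge popped_at_block by simp_all
  then show ?thesis
    using T by blast
qed

theorem mainTheorem10:
  fixes xs :: opseq and i :: nat
  assumes "well_formed xs" and "reduced xs"
    and "i < length xs" and "is_push (xs!i)"
    and "\<not> (\<exists>s t. corr_pops xs i = {s..<t})"
  shows "fixed_op xs i"
  unfolding fixed_op_def
proof (intro allI impI)
  fix ys
  assume "reduced ys \<and> equivalent ys xs"
  then have "well_formed ys" and "reduced ys" and "produced ys = produced xs"
    by (simp_all add: equivalent_def)
  moreover have "push_pattern (produced xs) (popped xs i) (pushed xs i + 1) (pushed xs (Suc i))"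
    using reduced_push.push_pattern_if_noncontiguous[OF reduced_push.intro[OF assms(1-4)] assms(5)] .
  ultimately obtain T where "T < length ys" "is_push (ys ! T)" "pushed ys T = pushed xs i"
    "pushed ys (Suc T) = pushed xs (Suc i)" "popped ys T = popped xs i"
    using push_of_pattern by fastforce
  moreover have "popped ys (Suc T) = popped ys T" and "popped xs (Suc i) = popped xs i"
    using calculation assms(3,4) by (auto simp: popped_Suc elim: is_push.elims)
  ultimately show "\<exists>j < length ys. vertex ys j = vertex xs i \<and> vertex ys (Suc j) = vertex xs (Suc i)"
    by (auto simp: vertex_eq)
qed

end
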